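(* If $G\curvearrowright X$ and $H\curvearrowright Y$ are group actions with $\mathrm{Con}(G\curvearrowright X)=\mathrm{Con}(H\curvearrowright Y)$, then $\tau(G\curvearrowright X)=\tau(H\curvearrowright Y)$.
   Context: For an action $G\curvearrowright X$, an ordered tuple $\mathfrak{g}=(g_1,\dots,g_n)$ of elements of $G$ and a finite partition $\mathcal{E}=\{E_1,\dots,E_m\}$ of $X$ (a configuration pair), a configuration is a tuple $C=(C_0,\dots,C_n)\in\{1,\dots,m\}^{n+1}$ such that some $x\in E_{C_0}$ satisfies $g_i\cdot x\in E_{C_i}$ for $i=1,\dots,n$; the set of these is $\mathrm{Con}(\mathfrak{g},\mathcal{E};X)$, and $\mathrm{Con}(G\curvearrowright X)=\{\mathrm{Con}(\mathfrak{g},\mathcal{E};X): (\mathfrak{g},\mathcal{E})\text{ a configuration pair}\}$. Two actions with equal such collections are called configuration equivalent. A paradoxical decomposition of $G\curvearrowright X$ consists of pairwise disjoint subsets $A_1,\dots,A_n,B_1,\dots,B_m$ of $X$ and elements $g_1,\dots,g_n,h_1,\dots,h_m\in G$ with $X=\bigcup_{i=1}^n g_iA_i=\bigcup_{j=1}^m h_jB_j$. The Tarski number $\tau(G\curvearrowright X)$ is the minimal number of pieces $n+m$ in such a decomposition, and $\infty$ if none exists. *)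

theory Defs
  imports "HOL-Algebra.Group_Action" "HOL-Library.Extended_Nat"
begin

definition is_fin_partition :: "'x set \<Rightarrow> 'x set list \<Rightarrow> bool" where
  "is_fin_partition X Es \<longleftrightarrow>
     (\<forall>k < length Es. Es ! k \<noteq> {}) \<and>
     (\<forall>k < length Es. \<forall>l < length Es. k \<noteq> l \<longrightarrow> Es ! k \<inter> Es ! l = {}) \<and>
     \<Union> (set Es) = X"

definition config_pair ::
  "('g, 'b) monoid_scheme \<Rightarrow> 'x set \<Rightarrow> 'g list \<Rightarrow> 'x set list \<Rightarrow> bool" where
  "config_pair G X gs Es \<longleftrightarrow> set gs \<subseteq> carrier G \<and> is_fin_partition X Es"

text \<open>Con(gs, Es; X): tuples (C_0,...,C_n) in {1..m}^(n+1), encoded as lists of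
  length n+1, realised by some point x (labels are 1-based, as in the paper).\<close>
definition Con :: "('g \<Rightarrow> 'x \<Rightarrow> 'x) \<Rightarrow> 'g list \<Rightarrow> 'x set list \<Rightarrow> nat list set" where
  "Con \<phi> gs Es = {C. length C = length gs + 1 \<and>
      (\<forall>i < length C. C ! i \<in> {1..length Es}) \<and>
      (\<exists>x. x \<in> Es ! (C ! 0 - 1) \<and>
           (\<forall>i \<in> {1..length gs}. \<phi> (gs ! (i - 1)) x \<in> Es ! (C ! i - 1)))}"

definition Con_action ::
  "('g, 'b) monoid_scheme \<Rightarrow> 'x set \<Rightarrow> ('g \<Rightarrow> 'x \<Rightarrow> 'x) \<Rightarrow> nat list set set" where
  "Con_action G X \<phi> = {Con \<phi> gs Es | gs Es. config_pair G X gs Es}"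

definition paradoxical_decomp ::
  "('g, 'b) monoid_scheme \<Rightarrow> 'x set \<Rightarrow> ('g \<Rightarrow> 'x \<Rightarrow> 'x) \<Rightarrow> nat \<Rightarrow> nat \<Rightarrow>
   (nat \<Rightarrow> 'x set) \<Rightarrow> (nat \<Rightarrow> 'x set) \<Rightarrow> (nat \<Rightarrow> 'g) \<Rightarrow> (nat \<Rightarrow> 'g) \<Rightarrow> bool" where
  "paradoxical_decomp G X \<phi> n m A B g h \<longleftrightarrow>
     (\<forall>i < n. A i \<subseteq> X \<and> g i \<in> carrier G) \<and>
     (\<forall>j < m. B j \<subseteq> X \<and> h j \<in> carrier G) \<and>
     (\<forall>i < n. \<forall>i' < n. i \<noteq> i' \<longrightarrow> A i \<inter> A i' = {}) \<and>
     (\<forall>j < m. \<forall>j' < m. j \<noteq> j' \<longrightarrow> B j \<inter> B j' = {}) \<and>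
     (\<forall>i < n. \<forall>j < m. A i \<inter> B j = {}) \<and>
     X = (\<Union>i<n. \<phi> (g i) ` A i) \<and>
     X = (\<Union>j<m. \<phi> (h j) ` B j)"

text \<open>Tarski number: least n+m over all paradoxical decompositions (Inf {} = \<infinity>).\<close>
definition tarski_number ::
  "('g, 'b) monoid_scheme \<Rightarrow> 'x set \<Rightarrow> ('g \<Rightarrow> 'x \<Rightarrow> 'x) \<Rightarrow> enat" where
  "tarski_number G X \<phi> =
     Inf {enat (n + m) | n m. \<exists>A B g h. paradoxical_decomp G X \<phi> n m A B g h}"

end

theory Submission
  imports Defs "HOL-Library.More_List"
begin

text \<open>
  Given a paradoxical decomposition with pieces \<open>P\<^sub>k\<close> and group elements \<open>e\<^sub>k\<close>
  (\<open>k < n + m\<close>), label each point by the piece containing it (or by \<open>n + m\<close> if there is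
  none) and take the partition into level sets together with the tuple of the \<open>e\<^sub>k\<^sup>-\<^sup>1\<close>.
  The decomposition then amounts to two covering conditions: every point is moved by some
  \<open>e\<^sub>k\<^sup>-\<^sup>1\<close> with \<open>k < n\<close>, resp. \<open>n \<le> k < n + m\<close>, into the block labelled \<open>k\<close>.
  Since the configuration of a point records the block of each of its translates, these
  conditions can be read off the set of configurations. They therefore hold for any action with
  the same configurations, and there the unions of equally labelled blocks, moved back by the
  inverses of the corresponding group elements, form a paradoxical decomposition with the same
  numbers of pieces.
\<close>

definition labelled_part :: "'x set list \<Rightarrow> (nat \<Rightarrow> nat) \<Rightarrow> nat \<Rightarrow> 'x set" where
  "labelled_part Es lab i = (\<Union>l \<in> {l. l < length Es \<and> lab l = i}. Es ! l)"

definition parts_cover ::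
  "('g \<Rightarrow> 'x \<Rightarrow> 'x) \<Rightarrow> 'x set \<Rightarrow> 'g list \<Rightarrow> 'x set list \<Rightarrow> (nat \<Rightarrow> nat) \<Rightarrow> nat set \<Rightarrow> bool" where
  "parts_cover \<phi> X gs Es lab S \<longleftrightarrow>
     (\<forall>x\<in>X. \<exists>i\<in>S. i < length gs \<and> \<phi> (gs ! i) x \<in> labelled_part Es lab i)"

definition block_index :: "'x set list \<Rightarrow> 'x \<Rightarrow> nat" where
  "block_index Es x = (THE l. l < length Es \<and> x \<in> Es ! l)"

definition configuration_of :: "('g \<Rightarrow> 'x \<Rightarrow> 'x) \<Rightarrow> 'g list \<Rightarrow> 'x set list \<Rightarrow> 'x \<Rightarrow> nat list" where
  "configuration_of \<phi> gs Es x = map (\<lambda>z. Suc (block_index Es z)) (x # map (\<lambda>g. \<phi> g x) gs)"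

definition level_sets :: "('x \<Rightarrow> nat) \<Rightarrow> 'x set \<Rightarrow> 'x set list" where
  "level_sets p X = map (\<lambda>k. {x \<in> X. p x = k}) (sorted_list_of_set (p ` X))"

lemma UN_atLeastLessThan_shift: "(\<Union>k\<in>{n..<n + m}. f k) = (\<Union>j<m. f (n + j :: nat))"
proof -
  have "{n..<n + m} = (+) n ` {..<m}"
    by (simp add: lessThan_atLeast0 add.commute)
  then show ?thesis
    by simp
qed

lemma fin_partition_block_subset:
  "is_fin_partition X Es \<Longrightarrow> l < length Es \<Longrightarrow> Es ! l \<subseteq> X"
  unfolding is_fin_partition_def by auto

lemma fin_partition_block_unique:
  assumes "is_fin_partition X Es" "l < length Es" "l' < length Es" "x \<in> Es ! l" "x \<in> Es ! l'"
  shows "l = l'"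
  using assms unfolding is_fin_partition_def by blast

lemma block_index_eq:
  assumes "is_fin_partition X Es" "l < length Es" "x \<in> Es ! l"
  shows "block_index Es x = l"
  unfolding block_index_def
  using assms fin_partition_block_unique[OF assms(1)] by (intro the_equality) auto

lemma block_index:
  assumes "is_fin_partition X Es" "x \<in> X"
  shows "block_index Es x < length Es" "x \<in> Es ! block_index Es x"
proof -
  obtain l where "l < length Es" "x \<in> Es ! l"
    using assms unfolding is_fin_partition_def by (auto simp: in_set_conv_nth)
  then show "block_index Es x < length Es" "x \<in> Es ! block_index Es x"
    using block_index_eq[OF assms(1)] by auto
qed

lemma labelled_part_subset: "is_fin_partition X Es \<Longrightarrow> labelled_part Es lab i \<subseteq> X"
  unfolding labelled_part_def using fin_partition_block_subset by blast

lemma labelled_part_disjoint: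
  assumes "is_fin_partition X Es" "i \<noteq> i'"
  shows "labelled_part Es lab i \<inter> labelled_part Es lab i' = {}"
  using assms fin_partition_block_unique[OF assms(1)] unfolding labelled_part_def by blast

lemma is_fin_partition_level_sets:
  assumes "finite (p ` X)"
  shows "is_fin_partition X (level_sets p X)"
proof -
  define L where "L = sorted_list_of_set (p ` X)"
  have set_L: "set L = p ` X" and "distinct L"
    using assms by (simp_all add: L_def)
  have "{x \<in> X. p x = L ! k} \<noteq> {}" if "k < length L" for k
  proof -
    have "L ! k \<in> p ` X"
      using that set_L nth_mem by metis
    then show ?thesis by auto
  qed
  moreover have "{x \<in> X. p x = L ! k} \<inter> {x \<in> X. p x = L ! l} = {}"
    if "k < length L" "l < length L" "k \<noteq> l" for k l
  proof -
    have "L ! k \<noteq> L ! l"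
      using that \<open>distinct L\<close> by (simp add: nth_eq_iff_index_eq)
    then show ?thesis by auto
  qed
  moreover have "(\<Union>k \<in> set L. {x \<in> X. p x = k}) = X"
    using set_L by blast
  ultimately show ?thesis
    unfolding is_fin_partition_def level_sets_def L_def[symmetric] by simp
qed

lemma labelled_part_level_sets:
  assumes "finite (p ` X)"
  shows "labelled_part (level_sets p X) ((!) (sorted_list_of_set (p ` X))) i = {x \<in> X. p x = i}"
proof -
  define L where "L = sorted_list_of_set (p ` X)"
  have "set L = p ` X"
    using assms by (simp add: L_def)
  then have "\<exists>l < length L. L ! l = i" if "x \<in> X" "p x = i" for x
    using that by (metis imageI in_set_conv_nth)
  then show ?thesis
    unfolding labelled_part_def level_sets_def L_def[symmetric] by auto
qed

sublocale group_action \<subseteq> group G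
  using group_hom group_hom.axioms(1) by auto

context group_action
begin

lemma configuration_of_in_Con:
  assumes "config_pair G E gs Es" "x \<in> E"
  shows "configuration_of \<phi> gs Es x \<in> Con \<phi> gs Es"
proof -
  have part: "is_fin_partition E Es" and gs: "set gs \<subseteq> carrier G"
    using assms(1) unfolding config_pair_def by auto
  have moved: "\<phi> (gs ! i) x \<in> E" if "i < length gs" for i
    using element_image gs that assms(2) by (meson nth_mem subsetD)
  show ?thesis
    unfolding Con_def configuration_of_def
  proof (intro CollectI conjI allI impI exI[of _ x] ballI)
    fix i assume "i < length (map (\<lambda>z. Suc (block_index Es z)) (x # map (\<lambda>g. \<phi> g x) gs))"
    then show "map (\<lambda>z. Suc (block_index Es z)) (x # map (\<lambda>g. \<phi> g x) gs) ! i \<in> {1..length Es}"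
      using block_index[OF part assms(2)] block_index[OF part moved]
      by (cases i) (auto simp: Suc_le_eq)
  next
    fix i assume "i \<in> {1..length gs}"
    then obtain i' where "i = Suc i'" "i' < length gs" by (cases i) auto
    then show "\<phi> (gs ! (i - 1)) x \<in>
        Es ! (map (\<lambda>z. Suc (block_index Es z)) (x # map (\<lambda>g. \<phi> g x) gs) ! i - 1)"
      using block_index(2)[OF part moved] by simp
  qed (use block_index(2)[OF part assms(2)] in simp_all)
qed

lemma parts_cover_iff_Con:
  assumes "config_pair G E gs Es"
  shows "parts_cover \<phi> E gs Es lab S \<longleftrightarrow>
    (\<forall>C \<in> Con \<phi> gs Es. \<exists>i\<in>S. Suc i < length C \<and> lab (C ! Suc i - 1) = i)"
proof
  have part: "is_fin_partition E Es"
    using assms unfolding config_pair_def by auto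
  assume cover: "parts_cover \<phi> E gs Es lab S"
  show "\<forall>C \<in> Con \<phi> gs Es. \<exists>i\<in>S. Suc i < length C \<and> lab (C ! Suc i - 1) = i"
  proof
    fix C assume "C \<in> Con \<phi> gs Es"
    then obtain x where len: "length C = length gs + 1"
      and range: "\<forall>i < length C. C ! i \<in> {1..length Es}"
      and x: "x \<in> Es ! (C ! 0 - 1)"
      and moved: "\<forall>i \<in> {1..length gs}. \<phi> (gs ! (i - 1)) x \<in> Es ! (C ! i - 1)"
      unfolding Con_def by blast
    have "x \<in> E"
      using x range fin_partition_block_subset[OF part, of "C ! 0 - 1"] len by fastforce
    then obtain i l where "i \<in> S" "i < length gs" "l < length Es" "lab l = i"
      and "\<phi> (gs ! i) x \<in> Es ! l"
      using cover unfolding parts_cover_def labelled_part_def by blast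
    moreover have "C ! Suc i - 1 < length Es" "\<phi> (gs ! i) x \<in> Es ! (C ! Suc i - 1)"
      using range[rule_format, of "Suc i"] moved[rule_format, of "Suc i"] len \<open>i < length gs\<close>
      by auto
    ultimately show "\<exists>i\<in>S. Suc i < length C \<and> lab (C ! Suc i - 1) = i"
      using fin_partition_block_unique[OF part] len by (metis add.commute plus_1_eq_Suc Suc_mono)
  qed
next
  have part: "is_fin_partition E Es" and gs: "set gs \<subseteq> carrier G"
    using assms unfolding config_pair_def by auto
  assume conf: "\<forall>C \<in> Con \<phi> gs Es. \<exists>i\<in>S. Suc i < length C \<and> lab (C ! Suc i - 1) = i"
  show "parts_cover \<phi> E gs Es lab S"
    unfolding parts_cover_def
  proof
    fix x assume "x \<in> E"
    define C where "C = configuration_of \<phi> gs Es x"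
    obtain i where "i \<in> S" "Suc i < length C" "lab (C ! Suc i - 1) = i"
      using conf configuration_of_in_Con[OF assms \<open>x \<in> E\<close>] unfolding C_def by blast
    moreover have "i < length gs"
      using \<open>Suc i < length C\<close> by (simp add: C_def configuration_of_def)
    moreover have "\<phi> (gs ! i) x \<in> E"
      using element_image gs \<open>i < length gs\<close> \<open>x \<in> E\<close> by (meson nth_mem subsetD)
    ultimately show "\<exists>i\<in>S. i < length gs \<and> \<phi> (gs ! i) x \<in> labelled_part Es lab i"
      using block_index[OF part] unfolding labelled_part_def
      by (auto simp: C_def configuration_of_def)
  qed
qed

lemma paradoxical_decomp_imp_parts_cover:
  assumes "paradoxical_decomp G E \<phi> n m A B g h"
  shows "\<exists>gs Es lab. config_pair G E gs Es \<and>
    parts_cover \<phi> E gs Es lab {..<n} \<and> parts_cover \<phi> E gs Es lab {n..<n+m}"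
proof -
  define piece where "piece k = (if k < n then A k else B (k - n))" for k
  define elt where "elt k = (if k < n then g k else h (k - n))" for k
  note decomp = assms[unfolded paradoxical_decomp_def]
  have piece_subset: "piece k \<subseteq> E" and elt_closed: "elt k \<in> carrier G" if "k < n + m" for k
    using decomp that unfolding piece_def elt_def by (cases "k < n"; simp)+
  have piece_disjoint: "piece k \<inter> piece k' = {}" if "k < n + m" "k' < n + m" "k \<noteq> k'" for k k'
    using decomp that unfolding piece_def
    by (cases "k < n"; cases "k' < n") (simp_all add: Int_commute)
  have cover_g: "E = (\<Union>i<n. \<phi> (g i) ` A i)" and cover_h: "E = (\<Union>j<m. \<phi> (h j) ` B j)"
    using decomp by blast+
  have cover_A: "E = (\<Union>k<n. \<phi> (elt k) ` piece k)"
    using cover_g unfolding piece_def elt_def by simp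
  have cover_B: "E = (\<Union>k\<in>{n..<n+m}. \<phi> (elt k) ` piece k)"
    using cover_h unfolding UN_atLeastLessThan_shift piece_def elt_def by simp
  define p where "p x = Min ({k. k < n + m \<and> x \<in> piece k} \<union> {n + m})" for x
  have p_eq: "p x = k" if "k < n + m" "x \<in> piece k" for x k
  proof -
    have "{k'. k' < n + m \<and> x \<in> piece k'} = {k}"
      using that piece_disjoint by blast
    then show ?thesis
      using that(1) by (simp add: p_def)
  qed
  have "p ` E \<subseteq> {..n + m}"
    by (auto simp: p_def)
  then have fin: "finite (p ` E)"
    using finite_subset by blast
  define gs where "gs = map (\<lambda>k. inv (elt k)) [0..<n+m]"
  define lab where "lab = (!) (sorted_list_of_set (p ` E))"
  have "config_pair G E gs (level_sets p E)"
    using elt_closed is_fin_partition_level_sets[OF fin]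
    by (auto simp: config_pair_def gs_def)
  moreover have "parts_cover \<phi> E gs (level_sets p E) lab S"
    if S_range: "S \<subseteq> {..<n + m}" and S_cover: "E = (\<Union>k\<in>S. \<phi> (elt k) ` piece k)" for S
    unfolding parts_cover_def lab_def labelled_part_level_sets[OF fin]
  proof
    fix x assume "x \<in> E"
    then obtain k a where k: "k \<in> S" "a \<in> piece k" "x = \<phi> (elt k) a"
      using S_cover by blast
    then have "k < n + m"
      using S_range by blast
    moreover have "a \<in> E"
      using piece_subset \<open>k < n + m\<close> k(2) by blast
    ultimately have "\<phi> (gs ! k) x = a"
      using orbit_sym_aux[OF elt_closed _ k(3)[symmetric]] by (simp add: gs_def)
    then show "\<exists>k\<in>S. k < length gs \<and> \<phi> (gs ! k) x \<in> {x \<in> E. p x = k}"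
      using k p_eq \<open>k < n + m\<close> \<open>a \<in> E\<close> by (auto simp: gs_def)
  qed
  moreover have "{..<n} \<subseteq> {..<n + m}" "{n..<n+m} \<subseteq> {..<n + m}"
    by auto
  ultimately show ?thesis
    using cover_A cover_B by blast
qed

lemma parts_cover_imp_UN_eq:
  assumes "config_pair G E gs Es" "parts_cover \<phi> E gs Es lab S"
  shows "E = (\<Union>i\<in>S. \<phi> (inv (nth_default \<one> gs i)) ` labelled_part Es lab i)"
proof
  have gs: "set gs \<subseteq> carrier G" and part: "is_fin_partition E Es"
    using assms(1) unfolding config_pair_def by auto
  then have "inv (nth_default \<one> gs i) \<in> carrier G" for i
    by (auto simp: nth_default_def dest: nth_mem)
  then show "(\<Union>i\<in>S. \<phi> (inv (nth_default \<one> gs i)) ` labelled_part Es lab i) \<subseteq> E"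
    using labelled_part_subset[OF part] element_image by blast
  show "E \<subseteq> (\<Union>i\<in>S. \<phi> (inv (nth_default \<one> gs i)) ` labelled_part Es lab i)"
  proof
    fix x assume "x \<in> E"
    then obtain i where i: "i \<in> S" "i < length gs" "\<phi> (gs ! i) x \<in> labelled_part Es lab i"
      using assms(2) unfolding parts_cover_def by blast
    have "gs ! i \<in> carrier G"
      using gs i(2) by (meson nth_mem subsetD)
    then have "\<phi> (inv (nth_default \<one> gs i)) (\<phi> (gs ! i) x) = x"
      using orbit_sym_aux[OF _ \<open>x \<in> E\<close> refl] i(2) by (simp add: nth_default_def)
    then show "x \<in> (\<Union>i\<in>S. \<phi> (inv (nth_default \<one> gs i)) ` labelled_part Es lab i)"
      using i by (metis UN_iff image_eqI)
  qed
qed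

lemma parts_cover_imp_paradoxical_decomp:
  assumes "config_pair G E gs Es"
    and "parts_cover \<phi> E gs Es lab {..<n}" "parts_cover \<phi> E gs Es lab {n..<n+m}"
  shows "\<exists>A B g h. paradoxical_decomp G E \<phi> n m A B g h"
proof -
  define g where "g i = inv (nth_default \<one> gs i)" for i
  define A where "A = labelled_part Es lab"
  have part: "is_fin_partition E Es"
    using assms(1) unfolding config_pair_def by auto
  have "g i \<in> carrier G" for i
    using assms(1) by (auto simp: g_def nth_default_def config_pair_def dest: nth_mem)
  moreover have "A i \<subseteq> E" for i
    using labelled_part_subset[OF part] by (simp add: A_def)
  moreover have "A i \<inter> A i' = {}" if "i \<noteq> i'" for i i'
    using labelled_part_disjoint[OF part that] by (simp add: A_def)
  moreover have "E = (\<Union>i<n. \<phi> (g i) ` A i)"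
    using parts_cover_imp_UN_eq[OF assms(1,2)] by (simp add: A_def g_def)
  moreover have "E = (\<Union>j<m. \<phi> (g (n + j)) ` A (n + j))"
    using parts_cover_imp_UN_eq[OF assms(1,3)] by (simp add: A_def g_def UN_atLeastLessThan_shift)
  ultimately have "paradoxical_decomp G E \<phi> n m A (\<lambda>j. A (n + j)) g (\<lambda>j. g (n + j))"
    unfolding paradoxical_decomp_def by auto
  then show ?thesis
    by blast
qed

end

lemma paradoxical_decomp_transfer:
  assumes "group_action G X \<phi>" "group_action H Y \<psi>" "Con_action G X \<phi> = Con_action H Y \<psi>"
    and "paradoxical_decomp G X \<phi> n m A B g h"
  shows "\<exists>A' B' g' h'. paradoxical_decomp H Y \<psi> n m A' B' g' h'"
proof -
  obtain gs Es lab where conf: "config_pair G X gs Es"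
    and cover_A: "parts_cover \<phi> X gs Es lab {..<n}"
    and cover_B: "parts_cover \<phi> X gs Es lab {n..<n+m}"
    using group_action.paradoxical_decomp_imp_parts_cover[OF assms(1,4)] by blast
  have "Con \<phi> gs Es \<in> Con_action H Y \<psi>"
    using conf assms(3)[symmetric] unfolding Con_action_def by blast
  then obtain ks Fs where conf': "config_pair H Y ks Fs" and Con_eq: "Con \<phi> gs Es = Con \<psi> ks Fs"
    unfolding Con_action_def by blast
  have "parts_cover \<psi> Y ks Fs lab S" if "parts_cover \<phi> X gs Es lab S" for S
    using that
    unfolding group_action.parts_cover_iff_Con[OF assms(1) conf]
      group_action.parts_cover_iff_Con[OF assms(2) conf'] Con_eq .
  then show ?thesis
    using group_action.parts_cover_imp_paradoxical_decomp[OF assms(2) conf'] cover_A cover_B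
    by blast
qed

theorem mainTheorem7:
  fixes G :: "('g, 'b) monoid_scheme" and X :: "'x set" and \<phi> :: "'g \<Rightarrow> 'x \<Rightarrow> 'x"
    and H :: "('h, 'c) monoid_scheme" and Y :: "'y set" and \<psi> :: "'h \<Rightarrow> 'y \<Rightarrow> 'y"
  assumes "group_action G X \<phi>" and "group_action H Y \<psi>"
    and "Con_action G X \<phi> = Con_action H Y \<psi>"
  shows "tarski_number G X \<phi> = tarski_number H Y \<psi>"
proof -
  have "(\<exists>A B g h. paradoxical_decomp G X \<phi> n m A B g h) \<longleftrightarrow>
        (\<exists>A B g h. paradoxical_decomp H Y \<psi> n m A B g h)" for n m
    using paradoxical_decomp_transfer[OF assms] paradoxical_decomp_transfer[OF assms(2,1) assms(3)[symmetric]]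
    by blast
  then show ?thesis
    unfolding tarski_number_def by simp
qed

end
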